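(* Consider the setting described in the context, for a connected undirected graph $G=(V,E)$ with $N$ nodes, and assume $D>2$. For $t\ge 1$ define $\mathcal{I}_0(t)=\bigcup_{m=0}^{t-1}\mathcal{F}_0(m)$, $\mathcal{I}_1(t)=\Big(\bigcup_{m=0}^{t-1}\mathcal{F}_{D-1}(m)\Big)\setminus \mathcal{I}_0(t)$, $\mathcal{I}_2(t)=V\setminus(\mathcal{I}_0(t)\cup\mathcal{I}_1(t))$. Then for every $t\ge 1$: $a_i(t)\le 2N$ for all $i\in\mathcal{I}_0(t)$; $a_i(t)=1$ for all $i\in\mathcal{I}_1(t)$; and $a_i(t)\le N$ for all $i\in\mathcal{I}_2(t)$.
   Context: $G=(V,E)$ is a finite connected undirected graph with node set $V=\{0,\dots,N-1\}$; $\mathcal{N}(i)$ denotes the set of neighbours of $i$. Every edge has length $1$, $d_{ij}$ is the hop distance between $i$ and $j$, and $\mathcal{F}_k(m)=\{i\in V : d_{ik}=m\}$. Every node carries value $v_i=1$. The source set is $S(t)=\{D-1\}$ for $t\le 0$ and $S(t)=\{0\}$ for $t\ge 1$. The integer $D$ is the effective diameter of $G$ with respect to source $0$, i.e. $\max_{i\in V} d_{i0}=D-1$, and nodes are labelled so that $0,1,\dots,D-1$ is a path in which node $i$ is a neighbour of $i+1$ with $d_{0,i+1}=d_{0,i}+1$ (so $d_{0,i}=i$ for $0\le i\le D-1$). The algorithm (Adaptive Bellman–Ford with collection and monotonic filtering) updates, for $t\ge1$: $\hat d_i(t)=0$ if $i\in S(t)$, and $\hat d_i(t)=\min_{j\in\mathcal{N}(i)}\{\hat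 d_j(t-1)+1\}$ otherwise; $c_i(t)=i$ if $i\in S(t)$, and otherwise $c_i(t)$ is a minimizer $j\in\mathcal{N}(i)$ of $\hat d_j(t-1)+1$; $C_i(t)=\{j : c_j(t-1)=i \text{ and } \hat d_j(t-1)=\hat d_i(t)+1\}$; $a_i(t)=\sum_{j\in C_i(t)}a_j(t-1)+v_i$. Initial values at $t=0$: $(\hat d_i(0),c_i(0),a_i(0))_{i\in V}$ are steady-state (fixed-point) values of these recursions when the source set is constantly $\{D-1\}$; in particular $\hat d_i(0)=m$ for all $i\in\mathcal{F}_{D-1}(m)$, and for every integer $m$, $\sum_{i\in\mathcal{F}_{D-1}(m)}a_i(0)\le N$. *)

theory Defs
  imports Main
begin

text \<open>Graph: node set {0..<N}, adjacency predicate E (symmetric, irreflexive,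
  only between nodes of V). Every edge has length 1.\<close>

definition nbrs :: "(nat \<Rightarrow> nat \<Rightarrow> bool) \<Rightarrow> nat \<Rightarrow> nat \<Rightarrow> nat set" where
  "nbrs E N i = {j. j < N \<and> E i j}"

definition hopdist :: "(nat \<Rightarrow> nat \<Rightarrow> bool) \<Rightarrow> nat \<Rightarrow> nat \<Rightarrow> nat" where
  "hopdist E i j = (LEAST n. (E ^^ n) i j)"

definition level :: "(nat \<Rightarrow> nat \<Rightarrow> bool) \<Rightarrow> nat \<Rightarrow> nat \<Rightarrow> nat \<Rightarrow> nat set" where
  "level E N k m = {i. i < N \<and> hopdist E i k = m}"

definition src :: "nat \<Rightarrow> nat \<Rightarrow> nat set" where
  "src D t = (if t = 0 then {D - 1} else {0})"

definition Cset :: "nat \<Rightarrow> (nat \<Rightarrow> nat \<Rightarrow> nat) \<Rightarrow> (nat \<Rightarrow> nat \<Rightarrow> nat) \<Rightarrow> nat \<Rightarrow> nat \<Rightarrow> nat set" where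
  "Cset N dhat c t i = {j. j < N \<and> c t j = i \<and> dhat t j = dhat (Suc t) i + 1}"

definition I0 :: "(nat \<Rightarrow> nat \<Rightarrow> bool) \<Rightarrow> nat \<Rightarrow> nat \<Rightarrow> nat set" where
  "I0 E N t = (\<Union>m\<in>{0..t-1}. level E N 0 m)"

definition I1 :: "(nat \<Rightarrow> nat \<Rightarrow> bool) \<Rightarrow> nat \<Rightarrow> nat \<Rightarrow> nat \<Rightarrow> nat set" where
  "I1 E N D t = (\<Union>m\<in>{0..t-1}. level E N (D - 1) m) - I0 E N t"

definition I2 :: "(nat \<Rightarrow> nat \<Rightarrow> bool) \<Rightarrow> nat \<Rightarrow> nat \<Rightarrow> nat \<Rightarrow> nat set" where
  "I2 E N D t = {0..<N} - (I0 E N t \<union> I1 E N D t)"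

end

theory Submission
  imports Defs
begin

text \<open>
  Write \<open>dp\<close> and \<open>dq\<close> for the hop distances to the old source \<open>D - 1\<close> and to the new
  source \<open>0\<close>. By induction on \<open>t\<close>, the estimates split into three regimes: nodes with
  \<open>dq < t\<close> already hold \<open>dq\<close>; nodes with \<open>dq \<ge> t\<close> but \<open>dp < t\<close> (the rising-value region)
  hold \<open>t\<close> or \<open>t + 1\<close>; all other nodes still hold \<open>dp\<close>.

  Collection follows the parent pointers, and every node has one parent, so the total collected
  on a set of nodes is at most its cardinality plus the total collected one round earlier on a
  set containing all their children. In the unaffected region the children of a node at old
  distance \<open>l\<close> lie at old distance \<open>l + 1\<close>, so the total on that level is at most the number
  of nodes with \<open>dp \<ge> l\<close>; at \<open>t = 0\<close> this follows from the fixed-point equations alone. A rising node has no children, since a child would make its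
  current estimate equal to its estimate two rounds earlier, which was below \<open>t\<close>; so it
  collects exactly \<open>1\<close>. Finally, a level \<open>dq = k\<close> of the reached region collects at most the
  reached nodes beyond it plus what its children collect at the wave front: rising nodes with
  \<open>dp \<le> k\<close> and unaffected levels with \<open>dp > k\<close>, at most \<open>N\<close> together. This gives \<open>2 N\<close>.
\<close>

lemma hopdist_walk:
  assumes "(E ^^ n) i x"
  shows "(E ^^ hopdist E i x) i x" and "hopdist E i x \<le> n"
  using assms unfolding hopdist_def by (auto intro: LeastI Least_le)

lemma hopdist_self [simp]: "hopdist E x x = 0"
  unfolding hopdist_def by simp

lemma hopdist_eq_0D: "(E ^^ n) i x \<Longrightarrow> hopdist E i x = 0 \<Longrightarrow> i = x"
  using hopdist_walk(1) by fastforce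

lemma hopdist_step_le: "E i j \<Longrightarrow> (E ^^ n) j x \<Longrightarrow> hopdist E i x \<le> Suc (hopdist E j x)"
  by (metis hopdist_walk relpowp_Suc_I2)

lemma hopdist_closer_step:
  assumes "(E ^^ n) i x" "i \<noteq> x"
  obtains j where "E i j" "Suc (hopdist E j x) = hopdist E i x"
proof -
  obtain m where m: "hopdist E i x = Suc m"
    using assms hopdist_eq_0D not0_implies_Suc by blast
  then obtain j where "E i j" "(E ^^ m) j x"
    using hopdist_walk(1)[OF assms(1)] relpowp_Suc_D2 by fastforce
  with m have "Suc (hopdist E j x) = hopdist E i x"
    using hopdist_walk(2) hopdist_step_le by (metis Suc_le_mono le_antisym)
  with \<open>E i j\<close> show thesis by (rule that)
qed

locale connected_graph =
  fixes E :: "nat \<Rightarrow> nat \<Rightarrow> bool" and N :: nat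
  assumes E_in_V: "E i j \<Longrightarrow> i < N \<and> j < N"
    and E_sym: "E i j \<Longrightarrow> E j i"
    and connected: "i < N \<Longrightarrow> j < N \<Longrightarrow> \<exists>n. (E ^^ n) i j"
begin

lemma nbrs_iff [simp]: "j \<in> nbrs E N i \<longleftrightarrow> E i j"
  using E_in_V unfolding nbrs_def by auto

lemma finite_nbrs [simp]: "finite (nbrs E N i)"
  unfolding nbrs_def by simp

lemma hopdist_nbr_le: "E i j \<Longrightarrow> x < N \<Longrightarrow> hopdist E i x \<le> Suc (hopdist E j x)"
  using E_in_V connected hopdist_step_le by metis

lemma closer_nbr:
  assumes "i < N" "x < N" "i \<noteq> x"
  obtains j where "E i j" "Suc (hopdist E j x) = hopdist E i x"
  using connected[OF assms(1,2)] hopdist_closer_step assms(3) by metis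

end

lemma sum_le_sum_children_add_card:
  fixes g h :: "'a \<Rightarrow> nat"
  assumes "finite S" "finite U"
    and h: "\<And>i. i \<in> S \<Longrightarrow> h i = sum g (C i) + 1"
    and C_sub: "\<And>i. i \<in> S \<Longrightarrow> C i \<subseteq> U"
    and parent: "\<And>i j. i \<in> S \<Longrightarrow> j \<in> C i \<Longrightarrow> f j = i"
  shows "sum h S \<le> sum g U + card S"
proof -
  have fin: "finite (C i)" if "i \<in> S" for i
    using C_sub[OF that] \<open>finite U\<close> by (rule finite_subset)
  have disj: "C i \<inter> C i' = {}" if "i \<in> S" "i' \<in> S" "i \<noteq> i'" for i i'
    using parent that by blast
  have "sum h S = (\<Sum>i\<in>S. sum g (C i) + 1)"
    using h by simp
  also have "\<dots> = (\<Sum>i\<in>S. sum g (C i)) + card S"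
    by (subst sum.distrib) simp
  also have "(\<Sum>i\<in>S. sum g (C i)) = sum g (\<Union>(C ` S))"
    using \<open>finite S\<close> fin disj by (simp add: sum.UNION_disjoint)
  also have "\<dots> \<le> sum g U"
    using C_sub \<open>finite U\<close> by (intro sum_mono2) auto
  finally show ?thesis by simp
qed

definition handover :: "nat \<Rightarrow> nat \<Rightarrow> nat \<Rightarrow> nat" where
  "handover p q t = (if t = 0 then p else q)"

text \<open>
  As \<open>t - 1\<close> truncates to \<open>0\<close>, at \<open>t = 0\<close> the
  recursions are the fixed-point equations of the initial state.
\<close>

locale source_handover = connected_graph E N
  for E :: "nat \<Rightarrow> nat \<Rightarrow> bool" and N :: nat +
  fixes p q :: nat and dhat c a :: "nat \<Rightarrow> nat \<Rightarrow> nat"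
  assumes p_in_V: "p < N" and q_in_V: "q < N"
    and dhat_rec: "i < N \<Longrightarrow> dhat t i =
      (if i = handover p q t then 0 else Min ((\<lambda>j. dhat (t - 1) j + 1) ` nbrs E N i))"
    and c_rec: "i < N \<Longrightarrow> i \<noteq> handover p q t \<Longrightarrow>
      c t i \<in> nbrs E N i \<and> dhat (t - 1) (c t i) + 1 = dhat t i"
    and a_rec: "i < N \<Longrightarrow>
      a t i = (\<Sum>j | j < N \<and> c (t - 1) j = i \<and> dhat (t - 1) j = dhat t i + 1. a (t - 1) j) + 1"
    and dhat_init: "i < N \<Longrightarrow> dhat 0 i = hopdist E i p"
begin

abbreviation dp :: "nat \<Rightarrow> nat" where "dp i \<equiv> hopdist E i p"
abbreviation dq :: "nat \<Rightarrow> nat" where "dq i \<equiv> hopdist E i q"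

definition reached :: "nat \<Rightarrow> nat set" where
  "reached t = {i. i < N \<and> dq i < t}"

definition rising :: "nat \<Rightarrow> nat set" where
  "rising t = {i. i < N \<and> t \<le> dq i \<and> dp i < t}"

definition unaffected :: "nat \<Rightarrow> nat set" where
  "unaffected t = {i. i < N \<and> t \<le> dq i \<and> t \<le> dp i}"

lemma regime_cases:
  assumes "j < N"
  obtains "j \<in> reached t" | "j \<in> rising t" | "j \<in> unaffected t"
proof (cases "dq j < t")
  case True
  then show ?thesis using assms that(1) by (simp add: reached_def)
next
  case False
  then show ?thesis using assms that(2,3) by (cases "dp j < t") (auto simp: rising_def unaffected_def)
qed

lemma dhat_new_source [simp]: "dhat (Suc t) q = 0"
  using dhat_rec[OF q_in_V] by (simp add: handover_def)

lemma dhat_Suc: "i < N \<Longrightarrow> i \<noteq> q \<Longrightarrow> dhat (Suc t) i = Min ((\<lambda>j. Suc (dhat t j)) ` nbrs E N i)"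
  using dhat_rec by (simp add: handover_def)

lemma dhat_Suc_geI:
  assumes "i < N" "i \<noteq> q" "\<And>j. E i j \<Longrightarrow> v \<le> Suc (dhat t j)"
  shows "v \<le> dhat (Suc t) i"
proof -
  obtain j where "E i j" using closer_nbr[OF assms(1) q_in_V assms(2)] .
  then have "nbrs E N i \<noteq> {}" by auto
  with assms show ?thesis by (simp add: dhat_Suc)
qed

lemma dhat_Suc_leI:
  assumes "i < N" "i \<noteq> q" "E i j" "Suc (dhat t j) \<le> v"
  shows "dhat (Suc t) i \<le> v"
proof -
  have "dhat (Suc t) i \<le> Suc (dhat t j)"
    using assms(1-3) by (simp add: dhat_Suc)
  with assms(4) show ?thesis by linarith
qed

definition dhat_regimes :: "nat \<Rightarrow> bool" where
  "dhat_regimes t \<longleftrightarrow> (\<forall>i \<in> reached t. dhat t i = dq i)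
     \<and> (\<forall>i \<in> rising t. t \<le> dhat t i \<and> dhat t i \<le> Suc t)
     \<and> (\<forall>i \<in> unaffected t. dhat t i = dp i)"

lemma dhat_regimes_0: "dhat_regimes 0"
  by (simp add: dhat_regimes_def reached_def rising_def unaffected_def dhat_init)

lemma dhat_unreached_ge:
  assumes "dhat_regimes t" "j < N" "t \<le> dq j"
  shows "t \<le> dhat t j"
  using assms by (cases "dp j < t") (auto simp: dhat_regimes_def rising_def unaffected_def)

lemma dhat_unreached_le:
  assumes "dhat_regimes t" "j < N" "t \<le> dq j"
  shows "dhat t j \<le> max (dp j) (Suc t)"
  using assms by (cases "dp j < t") (auto simp: dhat_regimes_def rising_def unaffected_def)

lemma dhat_Suc_reached:
  assumes reg: "dhat_regimes t" and i: "i \<in> reached (Suc t)"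
  shows "dhat (Suc t) i = dq i"
proof (cases "i = q")
  case False
  have iN: "i < N" and dqi: "dq i \<le> t" using i by (auto simp: reached_def)
  obtain j0 where j0: "E i j0" "Suc (dq j0) = dq i" using closer_nbr[OF iN q_in_V False] .
  have "dhat t j0 = dq j0"
    using reg j0 dqi E_in_V[OF j0(1)] by (auto simp: dhat_regimes_def reached_def)
  then have "dhat (Suc t) i \<le> dq i"
    using dhat_Suc_leI[OF iN False j0(1)] j0(2) by simp
  moreover have "dq i \<le> dhat (Suc t) i"
  proof (rule dhat_Suc_geI[OF iN False])
    fix j assume ij: "E i j"
    then have jN: "j < N" and "dq i \<le> Suc (dq j)" using E_in_V hopdist_nbr_le q_in_V by auto
    then show "dq i \<le> Suc (dhat t j)"
      using reg dhat_unreached_ge[OF reg jN] dqi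
      by (cases "dq j < t") (auto simp: dhat_regimes_def reached_def)
  qed
  ultimately show ?thesis by simp
qed simp

lemma dhat_Suc_rising:
  assumes reg: "dhat_regimes t" and i: "i \<in> rising (Suc t)"
  shows "Suc t \<le> dhat (Suc t) i \<and> dhat (Suc t) i \<le> Suc (Suc t)"
proof
  have iN: "i < N" and dqi: "Suc t \<le> dq i" and dpi: "dp i \<le> t" using i by (auto simp: rising_def)
  then have iq: "i \<noteq> q" by auto
  show "Suc t \<le> dhat (Suc t) i"
  proof (rule dhat_Suc_geI[OF iN iq])
    fix j assume "E i j"
    then have "j < N" "t \<le> dq j" using E_in_V hopdist_nbr_le[OF _ q_in_V] dqi by fastforce+
    then show "Suc t \<le> Suc (dhat t j)" using dhat_unreached_ge[OF reg] by simp
  qed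
  obtain j0 where j0: "E i j0" "Suc (dq j0) = dq i" using closer_nbr[OF iN q_in_V iq] .
  have "j0 < N" "t \<le> dq j0" "dp j0 \<le> Suc t"
    using E_in_V j0 dqi dpi hopdist_nbr_le[OF E_sym[OF j0(1)] p_in_V] by auto
  then have "dhat t j0 \<le> Suc t" using dhat_unreached_le[OF reg] by fastforce
  then show "dhat (Suc t) i \<le> Suc (Suc t)" using dhat_Suc_leI[OF iN iq j0(1)] by simp
qed

lemma dhat_Suc_unaffected:
  assumes reg: "dhat_regimes t" and i: "i \<in> unaffected (Suc t)"
  shows "dhat (Suc t) i = dp i"
proof -
  have iN: "i < N" and dqi: "Suc t \<le> dq i" and dpi: "Suc t \<le> dp i"
    using i by (auto simp: unaffected_def)
  then have iq: "i \<noteq> q" and ip: "i \<noteq> p" by auto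
  have nbr: "dhat t j = dp j" if "E i j" for j
  proof -
    have "j < N" "t \<le> dq j" "t \<le> dp j"
      using that E_in_V hopdist_nbr_le q_in_V p_in_V dqi dpi by fastforce+
    with reg show ?thesis by (auto simp: dhat_regimes_def unaffected_def)
  qed
  obtain j0 where j0: "E i j0" "Suc (dp j0) = dp i" using closer_nbr[OF iN p_in_V ip] .
  have "dhat (Suc t) i \<le> dp i" using dhat_Suc_leI[OF iN iq j0(1)] nbr[OF j0(1)] j0(2) by simp
  moreover have "dp i \<le> dhat (Suc t) i"
    using dhat_Suc_geI[OF iN iq] nbr hopdist_nbr_le[OF _ p_in_V] by simp
  ultimately show ?thesis by simp
qed

lemma dhat_regimes: "dhat_regimes t"
proof (induction t)
  case (Suc t)
  then show ?case
    using dhat_Suc_reached dhat_Suc_rising dhat_Suc_unaffected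
    by (simp add: dhat_regimes_def)
qed (rule dhat_regimes_0)

lemma dhat_reached: "i \<in> reached t \<Longrightarrow> dhat t i = dq i"
  using dhat_regimes by (simp add: dhat_regimes_def)

lemma dhat_rising: "i \<in> rising t \<Longrightarrow> t \<le> dhat t i \<and> dhat t i \<le> Suc t"
  using dhat_regimes by (simp add: dhat_regimes_def)

lemma dhat_unaffected: "i \<in> unaffected t \<Longrightarrow> dhat t i = dp i"
  using dhat_regimes by (simp add: dhat_regimes_def)

definition children :: "nat \<Rightarrow> nat \<Rightarrow> nat set" where
  "children t i = {j. j < N \<and> c (t - 1) j = i \<and> dhat (t - 1) j = Suc (dhat t i)}"

lemma child_nbr:
  assumes "j \<in> children t i"
  shows "E j i"
proof -
  have j: "j < N" "c (t - 1) j = i" "dhat (t - 1) j = Suc (dhat t i)"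
    using assms by (auto simp: children_def)
  have "j \<noteq> handover p q (t - 1)"
    using j(3) dhat_rec[OF j(1)] by auto
  then show ?thesis using c_rec[OF j(1)] j(2) by auto
qed

lemma sum_a_le:
  assumes "S \<subseteq> {..<N}" "finite U" "\<And>i j. i \<in> S \<Longrightarrow> j \<in> children t i \<Longrightarrow> j \<in> U"
  shows "sum (a t) S \<le> sum (a (t - 1)) U + card S"
proof (rule sum_le_sum_children_add_card[where C = "children t" and f = "c (t - 1)"])
  show "finite S" using assms(1) by (rule finite_subset) simp
  show "a t i = sum (a (t - 1)) (children t i) + 1" if "i \<in> S" for i
    using a_rec that assms(1) by (auto simp: children_def)
qed (use assms in \<open>auto simp: children_def\<close>)

lemma rising_childless:
  assumes i: "i \<in> rising t"
  shows "children t i = {}"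
proof (rule ccontr)
  assume "children t i \<noteq> {}"
  then obtain j where j: "j \<in> children t i" by blast
  then have jN: "j < N" and cj: "c (t - 1) j = i" and dj: "dhat (t - 1) j = Suc (dhat t i)"
    by (auto simp: children_def)
  have "j \<noteq> handover p q (t - 1)"
    using dj dhat_rec[OF jN] by auto
  then have "Suc (dhat (t - 1 - 1) i) = dhat (t - 1) j"
    using c_rec[OF jN, of "t - 1"] cj by simp
  with dj have loop: "dhat (t - 1 - 1) i = dhat t i" by simp
  have iN: "i < N" and dqi: "t \<le> dq i" and dpi: "dp i < t" using i by (auto simp: rising_def)
  have "dhat (t - 1 - 1) i < t"
  proof (cases "t - 1 - 1 = 0")
    case True
    with dpi show ?thesis by (simp add: dhat_init[OF iN])
  next
    case False
    with dqi have "t - 1 - 1 \<le> dq i" "Suc (t - 1 - 1) < t" by auto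
    then show ?thesis
      using dhat_unreached_le[OF dhat_regimes iN] dpi by fastforce
  qed
  with loop dhat_rising[OF i] show False by simp
qed

lemma a_rising: "i \<in> rising t \<Longrightarrow> a t i = 1"
  using a_rec rising_childless by (auto simp: rising_def children_def)

definition count_dp_ge :: "nat \<Rightarrow> nat" where
  "count_dp_ge l = card {i. i < N \<and> l \<le> dp i}"

lemma count_dp_ge_le: "count_dp_ge l \<le> N"
proof -
  have "count_dp_ge l \<le> card {..<N}" unfolding count_dp_ge_def by (rule card_mono) auto
  then show ?thesis by simp
qed

lemma count_dp_ge_unfold: "count_dp_ge l = card (level E N p l) + count_dp_ge (Suc l)"
proof -
  have "{i. i < N \<and> l \<le> dp i} = level E N p l \<union> {i. i < N \<and> Suc l \<le> dp i}"
    by (auto simp: level_def)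
  then show ?thesis
    unfolding count_dp_ge_def by (simp add: card_Un_disjoint level_def disjoint_iff)
qed

lemma card_dp_less_add_count_dp_ge: "card {i. i < N \<and> dp i < l} + count_dp_ge l = N"
proof -
  have "{i. i < N \<and> dp i < l} \<union> {i. i < N \<and> l \<le> dp i} = {..<N}" by auto
  moreover have "card ({i. i < N \<and> dp i < l} \<union> {i. i < N \<and> l \<le> dp i})
      = card {i. i < N \<and> dp i < l} + card {i. i < N \<and> l \<le> dp i}"
    by (rule card_Un_disjoint) auto
  ultimately show ?thesis unfolding count_dp_ge_def by simp
qed

lemma sum_a0_level: "sum (a 0) (level E N p l) \<le> count_dp_ge l"
proof -
  obtain B where B: "\<And>i. i < N \<Longrightarrow> dp i < B"
    using finite_nat_set_iff_bounded[of "dp ` {..<N}"] by auto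
  show ?thesis
  proof (induction "B - l" arbitrary: l)
    case 0
    then have "level E N p l = {}" using B by (fastforce simp: level_def)
    then show ?case by simp
  next
    case (Suc n)
    have "sum (a 0) (level E N p l) \<le> sum (a 0) (level E N p (Suc l)) + card (level E N p l)"
      by (rule sum_a_le[where t = 0, simplified]) (auto simp: level_def children_def dhat_init)
    also have "sum (a 0) (level E N p (Suc l)) \<le> count_dp_ge (Suc l)"
      using Suc.hyps(2) by (intro Suc.hyps(1)) simp
    finally show ?case using count_dp_ge_unfold[of l] by simp
  qed
qed

lemma unaffected_child:
  assumes i: "i \<in> unaffected (Suc t)" and j: "j \<in> children (Suc t) i"
  shows "j \<in> unaffected t \<and> dp j = Suc (dp i)"
proof -
  have ij: "E i j" using child_nbr[OF j] E_sym by blast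
  have "dq i \<le> Suc (dq j)" "dp i \<le> Suc (dp j)" "j < N"
    using hopdist_nbr_le[OF ij q_in_V] hopdist_nbr_le[OF ij p_in_V] E_in_V[OF ij] by auto
  with i have jt: "j \<in> unaffected t" by (auto simp: unaffected_def)
  have "dhat t j = Suc (dhat (Suc t) i)" using j by (simp add: children_def)
  with jt show ?thesis using dhat_unaffected i by simp
qed

lemma sum_a_unaffected: "sum (a t) (unaffected t \<inter> level E N p l) \<le> count_dp_ge l"
proof (induction t arbitrary: l)
  case 0
  have "unaffected 0 \<inter> level E N p l = level E N p l"
    by (auto simp: unaffected_def level_def)
  then show ?case using sum_a0_level by simp
next
  case (Suc t)
  have "sum (a (Suc t)) (unaffected (Suc t) \<inter> level E N p l)
      \<le> sum (a t) (unaffected t \<inter> level E N p (Suc l)) + card (unaffected (Suc t) \<inter> level E N p l)"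
  proof (rule sum_a_le[where t = "Suc t", simplified])
    fix i j assume "i \<in> unaffected (Suc t) \<inter> level E N p l" "j \<in> children (Suc t) i"
    then show "j \<in> unaffected t \<inter> level E N p (Suc l)"
      using unaffected_child[of i t j] by (auto simp: level_def unaffected_def)
  qed (auto simp: unaffected_def)
  also have "card (unaffected (Suc t) \<inter> level E N p l) \<le> card (level E N p l)"
    by (rule card_mono) (auto simp: level_def)
  finally show ?case using Suc.IH[of "Suc l"] count_dp_ge_unfold[of l] by linarith
qed

lemma a_unaffected: "i \<in> unaffected t \<Longrightarrow> a t i \<le> N"
proof -
  assume i: "i \<in> unaffected t"
  then have "a t i \<le> sum (a t) (unaffected t \<inter> level E N p (dp i))"
    by (intro member_le_sum) (auto simp: unaffected_def level_def)
  also have "\<dots> \<le> N" using sum_a_unaffected count_dp_ge_le order_trans by blast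
  finally show ?thesis .
qed

lemma reached_child:
  assumes i: "i \<in> reached (Suc t)" and j: "j \<in> children (Suc t) i"
  shows "j \<in> reached t \<and> dq j = Suc (dq i)
    \<or> t \<le> Suc (dq i) \<and> (j \<in> rising t \<or> j \<in> unaffected t \<and> dp j = Suc (dq i))"
proof -
  have jN: "j < N" and dj: "dhat t j = Suc (dq i)"
    using j dhat_reached[OF i] by (auto simp: children_def)
  from jN show ?thesis
  proof (cases rule: regime_cases[where t = t])
    case 1
    then show ?thesis using dj dhat_reached by simp
  next
    case 2
    then show ?thesis using dj dhat_rising[of j t] by auto
  next
    case 3
    then show ?thesis using dj dhat_unaffected[of j t] by (auto simp: unaffected_def)
  qed
qed

definition reached_from :: "nat \<Rightarrow> nat \<Rightarrow> nat set" where
  "reached_from k t = {i. i < N \<and> k \<le> dq i \<and> dq i < t}"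

lemma sum_a_reached_interior:
  assumes k: "Suc k < t"
    and IH: "sum (a t) (level E N q (Suc k)) \<le> card (reached_from (Suc k) t) + N"
  shows "sum (a (Suc t)) (level E N q k) \<le> card (reached_from k (Suc t)) + N"
proof -
  have "sum (a (Suc t)) (level E N q k) \<le> sum (a t) (level E N q (Suc k)) + card (level E N q k)"
  proof (rule sum_a_le[where t = "Suc t", simplified])
    fix i j assume "i \<in> level E N q k" "j \<in> children (Suc t) i"
    then show "j \<in> level E N q (Suc k)"
      using reached_child[of i t j] k by (auto simp: level_def reached_def)
  qed (auto simp: level_def)
  moreover have "card (level E N q k) + card (reached_from (Suc k) t) = card (reached_from k t)"
  proof -
    have "reached_from k t = level E N q k \<union> reached_from (Suc k) t"
      using k by (auto simp: level_def reached_from_def)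
    then show ?thesis
      by (simp add: card_Un_disjoint level_def reached_from_def disjoint_iff)
  qed
  moreover have "card (reached_from k t) \<le> card (reached_from k (Suc t))"
    by (rule card_mono) (auto simp: reached_from_def)
  ultimately show ?thesis using IH by linarith
qed

lemma sum_a_reached_front:
  assumes k: "k \<le> t" "t \<le> Suc k"
  shows "sum (a (Suc t)) (level E N q k) \<le> card (reached_from k (Suc t)) + N"
proof -
  let ?U = "unaffected t \<inter> level E N p (Suc k)"
  have "sum (a (Suc t)) (level E N q k) \<le> sum (a t) (rising t \<union> ?U) + card (level E N q k)"
  proof (rule sum_a_le[where t = "Suc t", simplified])
    fix i j assume "i \<in> level E N q k" "j \<in> children (Suc t) i"
    then show "j \<in> rising t \<union> ?U"
      using reached_child[of i t j] k by (auto simp: level_def reached_def unaffected_def)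
  qed (auto simp: level_def rising_def)
  also have "sum (a t) (rising t \<union> ?U) = card (rising t) + sum (a t) ?U"
    by (subst sum.union_disjoint) (auto simp: rising_def unaffected_def a_rising)
  also have "card (rising t) \<le> card {i. i < N \<and> dp i < Suc k}"
    using k by (intro card_mono) (auto simp: rising_def)
  also have "sum (a t) ?U \<le> count_dp_ge (Suc k)"
    by (rule sum_a_unaffected)
  also have "card (level E N q k) \<le> card (reached_from k (Suc t))"
    using k by (intro card_mono) (auto simp: level_def reached_from_def)
  finally show ?thesis using card_dp_less_add_count_dp_ge[of "Suc k"] by linarith
qed

lemma sum_a_reached:
  "k < t \<Longrightarrow> sum (a t) (level E N q k) \<le> card (reached_from k t) + N"
proof (induction t arbitrary: k)
  case (Suc t)
  show ?case
  proof (cases "Suc k < t")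
    case True
    then show ?thesis using Suc.IH[OF True] by (rule sum_a_reached_interior)
  next
    case False
    with Suc.prems show ?thesis by (intro sum_a_reached_front) auto
  qed
qed simp

lemma a_reached: "i \<in> reached t \<Longrightarrow> a t i \<le> 2 * N"
proof -
  assume i: "i \<in> reached t"
  then have "a t i \<le> sum (a t) (level E N q (dq i))"
    by (intro member_le_sum) (auto simp: reached_def level_def)
  also have "\<dots> \<le> card (reached_from (dq i) t) + N"
    using i by (intro sum_a_reached) (simp add: reached_def)
  also have "card (reached_from (dq i) t) \<le> card {..<N}"
    by (rule card_mono) (auto simp: reached_from_def)
  finally show ?thesis by simp
qed

end

lemma UN_level_eq:
  "1 \<le> t \<Longrightarrow> (\<Union>m\<in>{0..t - 1}. level E N k m) = {i. i < N \<and> hopdist E i k < t}"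
  by (auto simp: level_def)

lemma src_iff_handover: "i \<in> src D t \<longleftrightarrow> i = handover (D - 1) 0 t"
  by (simp add: src_def handover_def)

theorem theorem2:
  fixes E :: "nat \<Rightarrow> nat \<Rightarrow> bool" and N D :: nat
    and dhat c a :: "nat \<Rightarrow> nat \<Rightarrow> nat"
  assumes E_in_V: "\<And>i j. E i j \<Longrightarrow> i < N \<and> j < N"
    and E_sym: "\<And>i j. E i j \<Longrightarrow> E j i"
    and E_irrefl: "\<And>i. \<not> E i i"
    and connected: "\<And>i j. i < N \<Longrightarrow> j < N \<Longrightarrow> \<exists>n. (E ^^ n) i j"
    and D_gt: "D > 2"
    and D_le: "D \<le> N"
    and ecc: "\<And>i. i < N \<Longrightarrow> hopdist E i 0 \<le> D - 1"
    and path: "\<And>i. i + 1 < D \<Longrightarrow> E i (i + 1)"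
    and path_dist: "\<And>i. i < D \<Longrightarrow> hopdist E 0 i = i"
    (* initial values: a fixed point of the recursions with source set constantly {D-1} *)
    and fp_d: "\<And>i. i < N \<Longrightarrow> dhat 0 i =
        (if i \<in> src D 0 then 0 else Min ((\<lambda>j. dhat 0 j + 1) ` nbrs E N i))"
    and fp_c: "\<And>i. i < N \<Longrightarrow>
        (if i \<in> src D 0 then c 0 i = i
         else c 0 i \<in> nbrs E N i \<and> dhat 0 (c 0 i) + 1 = Min ((\<lambda>j. dhat 0 j + 1) ` nbrs E N i))"
    and fp_a: "\<And>i. i < N \<Longrightarrow>
        a 0 i = (\<Sum>j\<in>{j. j < N \<and> c 0 j = i \<and> dhat 0 j = dhat 0 i + 1}. a 0 j) + 1"
    and init_d: "\<And>m i. i \<in> level E N (D - 1) m \<Longrightarrow> dhat 0 i = m"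
    and init_a: "\<And>m. (\<Sum>i\<in>level E N (D - 1) m. a 0 i) \<le> N"
    (* updates for t \<ge> 1 (time Suc t computed from time t) *)
    and upd_d: "\<And>t i. i < N \<Longrightarrow> dhat (Suc t) i =
        (if i \<in> src D (Suc t) then 0 else Min ((\<lambda>j. dhat t j + 1) ` nbrs E N i))"
    and upd_c: "\<And>t i. i < N \<Longrightarrow>
        (if i \<in> src D (Suc t) then c (Suc t) i = i
         else c (Suc t) i \<in> nbrs E N i \<and> dhat t (c (Suc t) i) + 1 = Min ((\<lambda>j. dhat t j + 1) ` nbrs E N i))"
    and upd_a: "\<And>t i. i < N \<Longrightarrow>
        a (Suc t) i = (\<Sum>j\<in>Cset N dhat c t i. a t j) + 1"
  shows "\<forall>t\<ge>1. (\<forall>i\<in>I0 E N t. a t i \<le> 2 * N)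
              \<and> (\<forall>i\<in>I1 E N D t. a t i = 1)
              \<and> (\<forall>i\<in>I2 E N D t. a t i \<le> N)"
proof -
  interpret source_handover E N "D - 1" 0 dhat c a
  proof
    show "D - 1 < N" "0 < N" using D_gt D_le by auto
    show "dhat t i = (if i = handover (D - 1) 0 t then 0
        else Min ((\<lambda>j. dhat (t - 1) j + 1) ` nbrs E N i))" if "i < N" for t i
      using that fp_d upd_d by (cases t) (simp_all add: src_iff_handover)
    show "c t i \<in> nbrs E N i \<and> dhat (t - 1) (c t i) + 1 = dhat t i"
      if "i < N" "i \<noteq> handover (D - 1) 0 t" for t i
    proof (cases t)
      case 0
      then show ?thesis using that fp_c[OF that(1)] fp_d[OF that(1)] by (simp add: src_iff_handover)
    next
      case (Suc r)
      then show ?thesis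
        using that upd_c[OF that(1), of r] upd_d[OF that(1), of r] by (simp add: src_iff_handover)
    qed
    show "a t i = (\<Sum>j | j < N \<and> c (t - 1) j = i \<and> dhat (t - 1) j = dhat t i + 1. a (t - 1) j) + 1"
      if "i < N" for t i
      using that fp_a upd_a by (cases t) (simp_all add: Cset_def)
    show "dhat 0 i = hopdist E i (D - 1)" if "i < N" for i
      using init_d that by (simp add: level_def)
  qed (use E_in_V E_sym connected in auto)
  show ?thesis
  proof (intro allI impI)
    fix t :: nat assume t: "1 \<le> t"
    have "I0 E N t = reached t" "I1 E N D t = rising t" "I2 E N D t = unaffected t"
      unfolding I0_def I1_def I2_def UN_level_eq[OF t] reached_def rising_def unaffected_def
      by auto
    then show "(\<forall>i\<in>I0 E N t. a t i \<le> 2 * N) \<and> (\<forall>i\<in>I1 E N D t. a t i = 1)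
        \<and> (\<forall>i\<in>I2 E N D t. a t i \<le> N)"
      using a_reached a_rising a_unaffected by simp
  qed
qed

end
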